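(* Let $G^c$ be a connected vertex-coloured graph with $n$ vertices, $c$ colours and minimum degree $\delta$. Then either $\gamma^t(G^c)=c$ or $$\gamma^t(G^c)<\frac{1+\ln(\delta+1)}{\delta+1}(n-c+1)+c-1.$$
   Context: A vertex-coloured graph $G^c$ with colour set $\{1,\dots,c\}$ is a finite simple graph in which every vertex receives exactly one colour and every colour appears on at least one vertex. A dominating set is tropical if every colour appears on at least one of its vertices; $\gamma^t(G^c)$ is the minimum size of a tropical dominating set. *)

theory Defs
  imports "HOL-Analysis.Analysis"
begin

definition simple_graph :: "'a set \<Rightarrow> ('a \<Rightarrow> 'a \<Rightarrow> bool) \<Rightarrow> bool" where
  "simple_graph V E \<longleftrightarrow> finite V \<and> (\<forall>u v. E u v \<longrightarrow> u \<in> V \<and> v \<in> V)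
     \<and> (\<forall>u v. E u v \<longrightarrow> E v u) \<and> (\<forall>v. \<not> E v v)"

definition connected_graph :: "'a set \<Rightarrow> ('a \<Rightarrow> 'a \<Rightarrow> bool) \<Rightarrow> bool" where
  "connected_graph V E \<longleftrightarrow> V \<noteq> {} \<and>
     (\<forall>u\<in>V. \<forall>v\<in>V. (u, v) \<in> {(x, y). E x y}\<^sup>*)"

definition neighbours :: "'a set \<Rightarrow> ('a \<Rightarrow> 'a \<Rightarrow> bool) \<Rightarrow> 'a \<Rightarrow> 'a set" where
  "neighbours V E v = {u \<in> V. E v u}"

definition degree :: "'a set \<Rightarrow> ('a \<Rightarrow> 'a \<Rightarrow> bool) \<Rightarrow> 'a \<Rightarrow> nat" where
  "degree V E v = card (neighbours V E v)"

definition min_degree :: "'a set \<Rightarrow> ('a \<Rightarrow> 'a \<Rightarrow> bool) \<Rightarrow> nat" where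
  "min_degree V E = Min (degree V E ` V)"

definition vertex_colouring :: "'a set \<Rightarrow> ('a \<Rightarrow> nat) \<Rightarrow> nat \<Rightarrow> bool" where
  "vertex_colouring V col c \<longleftrightarrow> col ` V = {1..c}"

definition dominating_set :: "'a set \<Rightarrow> ('a \<Rightarrow> 'a \<Rightarrow> bool) \<Rightarrow> 'a set \<Rightarrow> bool" where
  "dominating_set V E D \<longleftrightarrow> D \<subseteq> V \<and> (\<forall>v\<in>V. v \<in> D \<or> (\<exists>u\<in>D. E v u))"

definition tropical_dominating_set ::
  "'a set \<Rightarrow> ('a \<Rightarrow> 'a \<Rightarrow> bool) \<Rightarrow> ('a \<Rightarrow> nat) \<Rightarrow> nat \<Rightarrow> 'a set \<Rightarrow> bool" where
  "tropical_dominating_set V E col c D \<longleftrightarrow> dominating_set V E D \<and> {1..c} \<subseteq> col ` D"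

definition tropical_domination_number ::
  "'a set \<Rightarrow> ('a \<Rightarrow> 'a \<Rightarrow> bool) \<Rightarrow> ('a \<Rightarrow> nat) \<Rightarrow> nat \<Rightarrow> nat" where
  "tropical_domination_number V E col c = Min (card ` {D. tropical_dominating_set V E col c D})"

end

theory Submission
  imports Defs
begin

(* A rainbow set R, with exactly one vertex of each colour, is tropical as soon as it dominates, so
   either the tropical domination number is c or some vertex u is undominated by R. Swapping u for
   the vertex of R of the same colour gives a rainbow set R' in which u has no neighbour.
   Now extend R' by a random set X, every other vertex taken independently with probability
   p = ln(\<delta>+1)/(\<delta>+1), and add all vertices still undominated. A vertex undominated by R' survives
   with probability at most (1-p)^(\<delta>+1) \<le> 1/(\<delta>+1), and there are at most n - c - \<delta> of them
   because the neighbours of u are dominated. Hence some X yields a tropical dominating set of size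
   at most c + p(n - c) + (n - c - \<delta>)/(\<delta>+1), which is below the claimed bound. *)

lemma sum_Pow_avoiding_weights:
  fixes p q :: "'b :: comm_semiring_1"
  assumes "finite A"
  shows "(\<Sum>X\<in>Pow A. if X \<inter> B = {} then p ^ card X * q ^ card (A - X) else 0)
       = (p + q) ^ card (A - B) * q ^ card (A \<inter> B)"
proof -
  define f where "f x = (if x \<in> B then 0 else p)" for x
  have "(\<Prod>x\<in>A. f x + q) = (\<Sum>X\<in>Pow A. prod f X * q ^ card (A - X))"
    using prod_add[OF assms, of f "\<lambda>_. q"] by simp
  also have "\<dots> = (\<Sum>X\<in>Pow A. if X \<inter> B = {} then p ^ card X * q ^ card (A - X) else 0)"
  proof (rule sum.cong[OF refl])
    fix X assume "X \<in> Pow A"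
    then have "finite X" using assms finite_subset by auto
    moreover have "prod f X = p ^ card X" if "X \<inter> B = {}"
      using that unfolding f_def by (simp add: prod.cong[of X X _ "\<lambda>_. p"] disjoint_iff)
    moreover have "prod f X = 0" if "X \<inter> B \<noteq> {}"
      using that \<open>finite X\<close> unfolding f_def by (intro prod_zero) auto
    ultimately show "prod f X * q ^ card (A - X) = (if X \<inter> B = {} then p ^ card X * q ^ card (A - X) else 0)"
      by auto
  qed
  moreover have "(\<Prod>x\<in>A. f x + q) = (p + q) ^ card (A - B) * q ^ card (A \<inter> B)"
  proof -
    have "(\<Prod>x\<in>A. f x + q) = (\<Prod>x\<in>A. if x \<in> B then q else p + q)"
      unfolding f_def by (rule prod.cong) auto
    then show ?thesis
      using assms by (simp add: prod.If_cases Diff_eq mult.commute)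
  qed
  ultimately show ?thesis by simp
qed

text \<open>Probability of drawing X when every element of A is kept independently with probability p.\<close>
definition sample_weight :: "real \<Rightarrow> 'a set \<Rightarrow> 'a set \<Rightarrow> real" where
  "sample_weight p A X = p ^ card X * (1 - p) ^ card (A - X)"

lemma sample_weight_nonneg: "0 \<le> p \<Longrightarrow> p \<le> 1 \<Longrightarrow> 0 \<le> sample_weight p A X"
  by (simp add: sample_weight_def)

lemma sum_sample_weight_avoiding:
  assumes "finite A" "B \<subseteq> A"
  shows "(\<Sum>X\<in>Pow A. if X \<inter> B = {} then sample_weight p A X else 0) = (1 - p) ^ card B"
  unfolding sample_weight_def
  using sum_Pow_avoiding_weights[OF assms(1), of B p "1 - p"] assms(2) by (simp add: Int_absorb1)

lemma sum_sample_weight: "finite A \<Longrightarrow> (\<Sum>X\<in>Pow A. sample_weight p A X) = 1"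
  using sum_sample_weight_avoiding[of A "{}" p] by simp

lemma sum_sample_weight_card:
  assumes "finite A"
  shows "(\<Sum>X\<in>Pow A. sample_weight p A X * card X) = p * card A"
proof -
  have "(\<Sum>X\<in>Pow A. sample_weight p A X * card X)
      = (\<Sum>X\<in>Pow A. \<Sum>a\<in>A. if a \<in> X then sample_weight p A X else 0)"
  proof (rule sum.cong[OF refl])
    fix X assume "X \<in> Pow A"
    then have "A \<inter> X = X" by auto
    then show "sample_weight p A X * card X = (\<Sum>a\<in>A. if a \<in> X then sample_weight p A X else 0)"
      using assms by (simp add: sum.If_cases)
  qed
  also have "\<dots> = (\<Sum>a\<in>A. \<Sum>X\<in>Pow A. if a \<in> X then sample_weight p A X else 0)"
    by (rule sum.swap)
  also have "\<dots> = (\<Sum>a\<in>A. p)"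
  proof (rule sum.cong[OF refl])
    fix a assume "a \<in> A"
    have "(\<Sum>X\<in>Pow A. if a \<in> X then sample_weight p A X else 0)
        = (\<Sum>X\<in>Pow A. sample_weight p A X) - (\<Sum>X\<in>Pow A. if X \<inter> {a} = {} then sample_weight p A X else 0)"
      unfolding sum_subtractf[symmetric] by (intro sum.cong) auto
    also have "\<dots> = p"
      using \<open>a \<in> A\<close> assms sum_sample_weight sum_sample_weight_avoiding[of A "{a}" p] by simp
    finally show "(\<Sum>X\<in>Pow A. if a \<in> X then sample_weight p A X else 0) = p" .
  qed
  finally show ?thesis by simp
qed

lemma exists_le_weighted_mean:
  fixes f w :: "'a \<Rightarrow> real"
  assumes "finite S" "\<And>x. x \<in> S \<Longrightarrow> 0 \<le> w x" "sum w S = 1"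
  shows "\<exists>x\<in>S. f x \<le> (\<Sum>y\<in>S. w y * f y)"
proof -
  have "S \<noteq> {}" using assms(3) by auto
  then obtain x where x: "x \<in> S" "\<And>y. y \<in> S \<Longrightarrow> f x \<le> f y"
    using arg_min_if_finite[OF assms(1), of f] by (metis not_less)
  have "f x = (\<Sum>y\<in>S. w y * f x)" using assms(3) by (simp add: sum_distrib_right[symmetric])
  also have "\<dots> \<le> (\<Sum>y\<in>S. w y * f y)"
    by (rule sum_mono) (simp add: assms(2) x(2) mult_left_mono)
  finally show ?thesis using x(1) by blast
qed

lemma exists_subset_card_plus_missed_le:
  fixes N :: "'b \<Rightarrow> 'a set" and p :: real
  assumes "finite A" "finite U" "\<And>u. u \<in> U \<Longrightarrow> N u \<subseteq> A" "0 \<le> p" "p \<le> 1"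
  shows "\<exists>X\<subseteq>A. real (card X + card {u\<in>U. N u \<inter> X = {}}) \<le> p * card A + (\<Sum>u\<in>U. (1 - p) ^ card (N u))"
proof -
  let ?w = "sample_weight p A"
  have missed: "(\<Sum>X\<in>Pow A. ?w X * card {u\<in>U. N u \<inter> X = {}}) = (\<Sum>u\<in>U. (1 - p) ^ card (N u))"
  proof -
    have "(\<Sum>X\<in>Pow A. ?w X * card {u\<in>U. N u \<inter> X = {}})
        = (\<Sum>X\<in>Pow A. \<Sum>u\<in>U. if X \<inter> N u = {} then ?w X else 0)"
      using assms(2) by (intro sum.cong refl) (simp add: sum.If_cases Int_commute Int_def)
    also have "\<dots> = (\<Sum>u\<in>U. \<Sum>X\<in>Pow A. if X \<inter> N u = {} then ?w X else 0)"
      by (rule sum.swap)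
    also have "\<dots> = (\<Sum>u\<in>U. (1 - p) ^ card (N u))"
      using assms(1,3) by (intro sum.cong refl sum_sample_weight_avoiding)
    finally show ?thesis .
  qed
  let ?f = "\<lambda>X. real (card X + card {u\<in>U. N u \<inter> X = {}})"
  have "\<exists>X\<in>Pow A. ?f X \<le> (\<Sum>Y\<in>Pow A. ?w Y * ?f Y)"
    using assms by (intro exists_le_weighted_mean) (auto simp: sample_weight_nonneg sum_sample_weight)
  moreover have "(\<Sum>Y\<in>Pow A. ?w Y * ?f Y) = p * card A + (\<Sum>u\<in>U. (1 - p) ^ card (N u))"
    using assms(1) by (simp add: distrib_left sum.distrib sum_sample_weight_card missed)
  ultimately show ?thesis by auto
qed

lemma one_minus_ln_div_pow_le:
  fixes k :: nat
  assumes "0 < k"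
  shows "(1 - ln k / k) ^ k \<le> 1 / k"
proof -
  have "ln k \<le> real k - 1" using assms by (intro ln_le_minus_one) simp
  then have "0 \<le> 1 - ln k / k" using assms by (simp add: field_simps)
  moreover have "1 - ln k / k \<le> exp (- (ln k / k))" using exp_ge_add_one_self[of "- (ln k / k)"] by simp
  ultimately have "(1 - ln k / k) ^ k \<le> exp (- (ln k / k)) ^ k" by (simp add: power_mono)
  also have "\<dots> = exp (- ln k)" using assms by (simp flip: exp_of_nat_mult)
  also have "\<dots> = 1 / k" using assms by (simp add: exp_minus inverse_eq_divide)
  finally show ?thesis .
qed

lemma min_degree_le_degree: "finite V \<Longrightarrow> v \<in> V \<Longrightarrow> min_degree V E \<le> degree V E v"
  unfolding min_degree_def by simp

lemma min_degree_ge_one: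
  assumes "simple_graph V E" "connected_graph V E" "u \<in> V" "w \<in> V" "u \<noteq> w"
  shows "1 \<le> min_degree V E"
proof -
  have fin: "finite V" using assms(1) unfolding simple_graph_def by blast
  have "1 \<le> degree V E v" if "v \<in> V" for v
  proof -
    obtain x where "x \<in> V" "x \<noteq> v" using assms(3-5) by blast
    then have "(v, x) \<in> {(x, y). E x y}\<^sup>*" "v \<noteq> x"
      using assms(2) \<open>v \<in> V\<close> unfolding connected_graph_def by auto
    then obtain y where "E v y" by (cases rule: converse_rtranclE) auto
    then have "y \<in> neighbours V E v"
      using assms(1) unfolding simple_graph_def neighbours_def by blast
    then show ?thesis
      using fin unfolding degree_def neighbours_def by (auto simp: Suc_le_eq card_gt_0_iff)
  qed
  then show ?thesis
    using fin assms(3) unfolding min_degree_def by (subst Min_ge_iff) auto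
qed

lemma card_le_of_tropical_dominating_set:
  assumes "finite V" "tropical_dominating_set V E col c D"
  shows "c \<le> card D"
proof -
  have D: "D \<subseteq> V" "{1..c} \<subseteq> col ` D"
    using assms(2) unfolding tropical_dominating_set_def dominating_set_def by auto
  then have "finite D" using assms(1) finite_subset by blast
  have "c = card {1..c}" by simp
  also have "\<dots> \<le> card (col ` D)" using D \<open>finite D\<close> by (intro card_mono) auto
  also have "\<dots> \<le> card D" using \<open>finite D\<close> by (rule card_image_le)
  finally show ?thesis .
qed

lemma finite_tropical_dominating_sets:
  "finite V \<Longrightarrow> finite {D. tropical_dominating_set V E col c D}"
  by (rule finite_subset[of _ "Pow V"]) (auto simp: tropical_dominating_set_def dominating_set_def)

lemma tropical_domination_number_le:
  "finite V \<Longrightarrow> tropical_dominating_set V E col c D \<Longrightarrow> tropical_domination_number V E col c \<le> card D"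
  unfolding tropical_domination_number_def by (simp add: finite_tropical_dominating_sets)

lemma tropical_domination_number_ge:
  assumes "finite V" "vertex_colouring V col c"
  shows "c \<le> tropical_domination_number V E col c"
proof -
  have "tropical_dominating_set V E col c V"
    using assms(2) unfolding tropical_dominating_set_def dominating_set_def vertex_colouring_def by simp
  then have "tropical_domination_number V E col c \<in> card ` {D. tropical_dominating_set V E col c D}"
    unfolding tropical_domination_number_def using assms(1)
    by (intro Min_in) (auto simp: finite_tropical_dominating_sets)
  then show ?thesis using card_le_of_tropical_dominating_set[OF assms(1)] by auto
qed

lemma exchange_rainbow:
  assumes "inj_on f R" "u \<notin> R" "f u \<in> f ` R"
  obtains r where "r \<in> R" "inj_on f (insert u (R - {r}))" "f ` insert u (R - {r}) = f ` R"
proof -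
  obtain r where r: "r \<in> R" "f r = f u" using assms(3) by auto
  have "inj_on f (insert u (R - {r}))"
    using assms(1,2) r by (auto simp: inj_on_def)
  moreover have "f ` insert u (R - {r}) = f ` R"
    using r by (metis image_insert insert_Diff)
  ultimately show thesis using that r by blast
qed

definition undominated :: "'a set \<Rightarrow> ('a \<Rightarrow> 'a \<Rightarrow> bool) \<Rightarrow> 'a set \<Rightarrow> 'a set" where
  "undominated V E S = {v \<in> V. v \<notin> S \<and> (\<forall>s\<in>S. \<not> E v s)}"

lemma dominating_set_Un_undominated: "S \<subseteq> V \<Longrightarrow> dominating_set V E (S \<union> undominated V E S)"
  unfolding dominating_set_def undominated_def by auto

lemma undominated_Un:
  "undominated V E (S \<union> X) = {v \<in> undominated V E S. insert v (neighbours V E v) \<inter> X = {}}"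
  if "X \<subseteq> V"
  using that unfolding undominated_def neighbours_def by auto

lemma exists_dominating_superset:
  fixes p :: real
  assumes "simple_graph V E" "S \<subseteq> V" "\<And>v. v \<in> V \<Longrightarrow> k \<le> degree V E v" "0 \<le> p" "p \<le> 1"
  obtains D where "S \<subseteq> D" "dominating_set V E D"
    "card D \<le> card S + p * card (V - S) + card (undominated V E S) * (1 - p) ^ (k + 1)"
proof -
  have fin: "finite V" and irrefl: "\<And>v. \<not> E v v" using assms(1) unfolding simple_graph_def by auto
  let ?U = "undominated V E S"
  let ?N = "\<lambda>v. insert v (neighbours V E v)"
  have finU: "finite ?U" using fin unfolding undominated_def by simp
  have N_sub: "?N v \<subseteq> V - S" if "v \<in> ?U" for v
    using that unfolding undominated_def neighbours_def by auto
  have card_N: "k + 1 \<le> card (?N v)" if "v \<in> V" for v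
    using assms(3)[OF that] fin irrefl unfolding degree_def neighbours_def by simp
  obtain X where X: "X \<subseteq> V - S"
    and bound: "real (card X + card {v\<in>?U. ?N v \<inter> X = {}}) \<le> p * card (V - S) + (\<Sum>v\<in>?U. (1 - p) ^ card (?N v))"
    using exists_subset_card_plus_missed_le[of "V - S" ?U ?N p] fin finU N_sub assms(4,5) by auto
  have missed_eq: "{v\<in>?U. ?N v \<inter> X = {}} = undominated V E (S \<union> X)"
    using X by (intro undominated_Un[symmetric]) auto
  have "real (card X) + card (undominated V E (S \<union> X)) = real (card X + card {v\<in>?U. ?N v \<inter> X = {}})"
    by (simp only: missed_eq of_nat_add)
  also have "\<dots> \<le> p * card (V - S) + (\<Sum>v\<in>?U. (1 - p) ^ card (?N v))" by (rule bound)
  also have "(\<Sum>v\<in>?U. (1 - p) ^ card (?N v)) \<le> (\<Sum>v\<in>?U. (1 - p) ^ (k + 1))"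
    using assms(4,5) card_N unfolding undominated_def by (intro sum_mono power_decreasing) auto
  also have "\<dots> = card ?U * (1 - p) ^ (k + 1)" by simp
  finally have bound': "real (card X) + card (undominated V E (S \<union> X))
      \<le> p * card (V - S) + card ?U * (1 - p) ^ (k + 1)" by simp
  define D where "D = (S \<union> X) \<union> undominated V E (S \<union> X)"
  have "card D \<le> card S + card X + card (undominated V E (S \<union> X))"
    unfolding D_def using card_Un_le[of "S \<union> X" "undominated V E (S \<union> X)"] card_Un_le[of S X]
    by linarith
  then have "card D \<le> card S + p * card (V - S) + card ?U * (1 - p) ^ (k + 1)"
    using bound' by linarith
  moreover have "dominating_set V E D"
    unfolding D_def using X assms(2) by (intro dominating_set_Un_undominated) auto
  moreover have "S \<subseteq> D" unfolding D_def by blast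
  ultimately show thesis by (intro that)
qed

lemma card_undominated_le:
  assumes "simple_graph V E" "S \<subseteq> V" "u \<in> S" "\<forall>s\<in>S. \<not> E u s"
  shows "card (undominated V E S) + degree V E u \<le> card V - card S"
proof -
  have fin: "finite V" and sym: "\<And>v w. E v w \<Longrightarrow> E w v" using assms(1) unfolding simple_graph_def by auto
  have disj: "undominated V E S \<inter> neighbours V E u = {}"
    using assms(3) sym unfolding undominated_def neighbours_def by auto
  have sub: "undominated V E S \<union> neighbours V E u \<subseteq> V - S"
    using assms(4) unfolding undominated_def neighbours_def by auto
  have "finite (undominated V E S)" "finite (neighbours V E u)"
    using fin unfolding undominated_def neighbours_def by auto
  then have "card (undominated V E S) + card (neighbours V E u) = card (undominated V E S \<union> neighbours V E u)"
    using disj by (simp add: card_Un_disjoint)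
  also have "\<dots> \<le> card (V - S)" using fin sub by (intro card_mono) auto
  also have "\<dots> = card V - card S" using card_Diff_subset[OF finite_subset[OF assms(2) fin] assms(2)] .
  finally show ?thesis by (simp add: degree_def)
qed

lemma tropical_domination_number_le_isolated_rainbow:
  fixes p :: real
  assumes "simple_graph V E" "R \<subseteq> V" "inj_on col R" "col ` R = {1..c}"
    "u \<in> R" "\<forall>r\<in>R. \<not> E u r" "0 \<le> p" "p \<le> 1"
  shows "real (tropical_domination_number V E col c) \<le> real c + p * (real (card V) - real c)
    + (real (card V) - real c - real (min_degree V E)) * (1 - p) ^ (min_degree V E + 1)"
proof -
  let ?\<delta> = "min_degree V E" and ?q = "(1 - p) ^ (min_degree V E + 1)"
  have fin: "finite V" using assms(1) unfolding simple_graph_def by blast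
  have cardR: "card R = c" using card_image[OF assms(3)] assms(4) by simp
  obtain D where D: "R \<subseteq> D" "dominating_set V E D"
    "card D \<le> card R + p * card (V - R) + card (undominated V E R) * ?q"
    using exists_dominating_superset[OF assms(1,2) min_degree_le_degree[OF fin] assms(7,8)] by blast
  have "tropical_dominating_set V E col c D"
    using D(1,2) image_mono[OF D(1), of col] assms(4) unfolding tropical_dominating_set_def by simp
  then have "tropical_domination_number V E col c \<le> card D" by (rule tropical_domination_number_le[OF fin])
  then have t: "real (tropical_domination_number V E col c) \<le> card D" by simp
  have cV: "c \<le> card V" using card_mono[OF fin assms(2)] cardR by simp
  have "card (V - R) = card V - c"
    using card_Diff_subset[OF finite_subset[OF assms(2) fin] assms(2)] cardR by simp
  then have VR: "real (card (V - R)) = real (card V) - real c" using cV by (simp add: of_nat_diff)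
  have "card (undominated V E R) + ?\<delta> + c \<le> card V"
    using card_undominated_le[OF assms(1,2,5,6)] min_degree_le_degree[OF fin subsetD[OF assms(2,5)], of E]
      cardR cV by linarith
  then have "real (card (undominated V E R) + ?\<delta> + c) \<le> real (card V)" by (rule of_nat_mono)
  then have "card (undominated V E R) * ?q \<le> (real (card V) - real c - real ?\<delta>) * ?q"
    using assms(8) by (intro mult_right_mono) auto
  then show ?thesis using t D(3) unfolding cardR VR by linarith
qed

lemma exists_rainbow_with_isolated_vertex:
  assumes "simple_graph V E" "vertex_colouring V col c"
    "R \<subseteq> V" "inj_on col R" "col ` R = {1..c}" "\<not> dominating_set V E R"
  obtains R' u w where "R' \<subseteq> V" "inj_on col R'" "col ` R' = {1..c}" "u \<in> R'" "\<forall>r\<in>R'. \<not> E u r"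
    "w \<in> V" "w \<noteq> u"
proof -
  obtain u where u: "u \<in> V" "u \<notin> R" "\<forall>r\<in>R. \<not> E u r"
    using assms(3,6) unfolding dominating_set_def by auto
  have "col u \<in> col ` R" using u(1) assms(2,5) unfolding vertex_colouring_def by auto
  then obtain r where r: "r \<in> R" "inj_on col (insert u (R - {r}))" "col ` insert u (R - {r}) = col ` R"
    by (rule exchange_rainbow[OF assms(4) u(2)])
  have "\<not> E u u" using assms(1) unfolding simple_graph_def by blast
  show thesis
  proof (rule that[of "insert u (R - {r})" u r])
    show "\<forall>s\<in>insert u (R - {r}). \<not> E u s" using u(3) \<open>\<not> E u u\<close> by blast
  qed (use assms(3,5) u r in auto)
qed

lemma random_domination_bound_lt:
  fixes d :: nat and a c :: real
  defines "p \<equiv> ln (real d + 1) / (real d + 1)"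
  assumes "1 \<le> d" "real d \<le> a"
  shows "c + p * a + (a - real d) * (1 - p) ^ (d + 1)
    < (1 + ln (real d + 1)) / (real d + 1) * (a + 1) + c - 1"
proof -
  have "(1 - p) ^ (d + 1) \<le> 1 / (real d + 1)"
    using one_minus_ln_div_pow_le[of "d + 1"] unfolding p_def by (simp add: add.commute)
  then have decay: "(a - real d) * (1 - p) ^ (d + 1) \<le> (a - real d) / (real d + 1)"
    using assms(3) by (simp add: mult_left_mono divide_inverse)
  have gap: "(1 + L) / k * (a + 1) + c - 1 - (c + L / k * a + (a - (k - 1)) / k) = L / k"
    if "0 < k" for k L :: real
    using that by (simp add: field_simps)
  have "(1 + ln (real d + 1)) / (real d + 1) * (a + 1) + c - 1 - (c + p * a + (a - real d) / (real d + 1))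
      = ln (real d + 1) / (real d + 1)"
    using gap[of "real d + 1" "ln (real d + 1)"] unfolding p_def by simp
  moreover have "0 < ln (real d + 1) / (real d + 1)" using assms(2) by simp
  ultimately show ?thesis using decay by linarith
qed

theorem mainTheorem5:
  fixes V :: "'a set" and E :: "'a \<Rightarrow> 'a \<Rightarrow> bool" and col :: "'a \<Rightarrow> nat" and c :: nat
  assumes "simple_graph V E" and "connected_graph V E" and "vertex_colouring V col c"
  shows "tropical_domination_number V E col c = c \<or>
    real (tropical_domination_number V E col c)
      < (1 + ln (real (min_degree V E) + 1)) / (real (min_degree V E) + 1)
          * (real (card V) - real c + 1) + real c - 1"
proof -
  have fin: "finite V" using assms(1) unfolding simple_graph_def by blast
  let ?t = "tropical_domination_number V E col c" and ?\<delta> = "min_degree V E"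
  obtain R where R: "R \<subseteq> V" "inj_on col R" "col ` R = {1..c}"
    using subset_image_inj[of "{1..c}" col V] assms(3) unfolding vertex_colouring_def by auto
  show ?thesis
  proof (cases "dominating_set V E R")
    case True
    then have "?t \<le> card R"
      using R(3) tropical_domination_number_le[OF fin] unfolding tropical_dominating_set_def by simp
    then show ?thesis
      using tropical_domination_number_ge[OF fin assms(3), of E] card_image[OF R(2)] R(3) by simp
  next
    case False
    then obtain R' u w where R': "R' \<subseteq> V" "inj_on col R'" "col ` R' = {1..c}" "u \<in> R'" "\<forall>r\<in>R'. \<not> E u r"
      and "w \<in> V" "w \<noteq> u"
      using exists_rainbow_with_isolated_vertex[OF assms(1,3) R] by metis
    then have "1 \<le> ?\<delta>" using min_degree_ge_one[OF assms(1,2)] R'(1,4) by blast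
    define p where "p = ln (real ?\<delta> + 1) / (real ?\<delta> + 1)"
    have "ln (real ?\<delta> + 1) \<le> real ?\<delta> + 1" using ln_le_minus_one[of "real ?\<delta> + 1"] by simp
    then have "0 \<le> p" "p \<le> 1" unfolding p_def by simp_all
    have "?\<delta> + c \<le> card V"
      using card_undominated_le[OF assms(1) R'(1,4,5)] min_degree_le_degree[OF fin subsetD[OF R'(1,4)], of E]
        card_mono[OF fin R'(1)] card_image[OF R'(2)] R'(3) by simp
    then have "real ?\<delta> \<le> real (card V) - real c" by linarith
    with \<open>1 \<le> ?\<delta>\<close> show ?thesis
      using tropical_domination_number_le_isolated_rainbow[OF assms(1) R' \<open>0 \<le> p\<close> \<open>p \<le> 1\<close>]
        random_domination_bound_lt[of ?\<delta> "real (card V) - real c" c] unfolding p_def by linarith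
  qed
qed

end
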